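(* Let $M^{2n+1}(f,Q,\xi,\eta,g)$ be a weak almost contact metric manifold such that $(\nabla_Xf)Y=g(X,Y)\xi-\eta(Y)X$ for all vector fields $X,Y$, and $(\nabla_X\widetilde Q)Y=0$ for all $X\in TM$, $Y\in\ker\eta$. Then $Q=\mathrm{id}_{TM}$ and $M(f,\xi,\eta,g)$ is Sasakian.
   Context: A weak almost contact metric structure on $M^{2n+1}$ consists of a $(1,1)$-tensor field $f$ of rank $2n$, a vector field $\xi$, a $1$-form $\eta$, a nonsingular $(1,1)$-tensor field $Q$ and a Riemannian metric $g$ such that $f^2=-Q+\eta\otimes\xi$, $\eta(\xi)=1$, $Q\xi=\xi$, $\ker\eta$ is $f$-invariant, and $g(fX,fY)=g(X,QY)-\eta(X)\eta(Y)$. $\widetilde Q=Q-\mathrm{id}$, $\nabla$ is the Levi-Civita connection of $g$. A Sasakian structure is an almost contact metric structure ($Q=\mathrm{id}$) with $(\nabla_Xf)Y=g(X,Y)\xi-\eta(Y)X$. *)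

theory Defs
  imports "HOL-Analysis.Analysis"
begin

text \<open>Local (chart) model: the manifold is an open set U in real^'m, tangent vectors at
 each point are elements of real^'m. Tensor fields are given pointwise.\<close>

type_synonym 'm vec = "real ^ 'm"

fun iter_dd :: "('m::finite) vec list \<Rightarrow> (('m::finite) vec \<Rightarrow> real) \<Rightarrow> ('m::finite) vec \<Rightarrow> real" where
  "iter_dd [] h = h"
| "iter_dd (v # vs) h = (\<lambda>p. frechet_derivative (iter_dd vs h) (at p) v)"

definition smooth_fun :: "('m::finite) vec set \<Rightarrow> (('m::finite) vec \<Rightarrow> real) \<Rightarrow> bool" where
  "smooth_fun U h \<longleftrightarrow> (\<forall>vs. \<forall>p\<in>U. iter_dd vs h differentiable (at p))"

definition smooth_vf :: "('m::finite) vec set \<Rightarrow> (('m::finite) vec \<Rightarrow> ('m::finite) vec) \<Rightarrow> bool" where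
  "smooth_vf U X \<longleftrightarrow> (\<forall>i. smooth_fun U (\<lambda>q. X q $ i))"

definition smooth_11 :: "('m::finite) vec set \<Rightarrow> (('m::finite) vec \<Rightarrow> ('m::finite) vec \<Rightarrow> ('m::finite) vec) \<Rightarrow> bool" where
  "smooth_11 U F \<longleftrightarrow> (\<forall>w. smooth_vf U (\<lambda>q. F q w))"

definition smooth_form :: "('m::finite) vec set \<Rightarrow> (('m::finite) vec \<Rightarrow> ('m::finite) vec \<Rightarrow> real) \<Rightarrow> bool" where
  "smooth_form U \<eta> \<longleftrightarrow> (\<forall>w. smooth_fun U (\<lambda>q. \<eta> q w))"

definition smooth_02 :: "('m::finite) vec set \<Rightarrow> (('m::finite) vec \<Rightarrow> ('m::finite) vec \<Rightarrow> ('m::finite) vec \<Rightarrow> real) \<Rightarrow> bool" where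
  "smooth_02 U g \<longleftrightarrow> (\<forall>v w. smooth_fun U (\<lambda>q. g q v w))"

definition riemannian_metric :: "('m::finite) vec set \<Rightarrow> (('m::finite) vec \<Rightarrow> ('m::finite) vec \<Rightarrow> ('m::finite) vec \<Rightarrow> real) \<Rightarrow> bool" where
  "riemannian_metric U g \<longleftrightarrow> smooth_02 U g \<and>
     (\<forall>p\<in>U. bilinear (g p) \<and> (\<forall>v w. g p v w = g p w v) \<and> (\<forall>v. v \<noteq> 0 \<longrightarrow> g p v v > 0))"

text \<open>Levi-Civita connection in the chart, given by its Christoffel map Gamma:
  nabla_X Y = DY(X) + Gamma(X,Y). Levi-Civita = torsion free and metric.\<close>
definition levi_civita :: "('m::finite) vec set \<Rightarrow> (('m::finite) vec \<Rightarrow> ('m::finite) vec \<Rightarrow> ('m::finite) vec \<Rightarrow> real)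
    \<Rightarrow> (('m::finite) vec \<Rightarrow> ('m::finite) vec \<Rightarrow> ('m::finite) vec \<Rightarrow> ('m::finite) vec) \<Rightarrow> bool" where
  "levi_civita U g \<Gamma> \<longleftrightarrow> (\<forall>v. smooth_11 U (\<lambda>q w. \<Gamma> q v w)) \<and>
     (\<forall>p\<in>U. bilinear (\<Gamma> p) \<and> (\<forall>v w. \<Gamma> p v w = \<Gamma> p w v) \<and>
        (\<forall>v w z. frechet_derivative (\<lambda>q. g q w z) (at p) v
                   = g p (\<Gamma> p v w) z + g p w (\<Gamma> p v z)))"

definition nabla11 :: "(('m::finite) vec \<Rightarrow> ('m::finite) vec \<Rightarrow> ('m::finite) vec \<Rightarrow> ('m::finite) vec)
    \<Rightarrow> (('m::finite) vec \<Rightarrow> ('m::finite) vec \<Rightarrow> ('m::finite) vec) \<Rightarrow> ('m::finite) vec \<Rightarrow> ('m::finite) vec \<Rightarrow> ('m::finite) vec \<Rightarrow> ('m::finite) vec" where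
  "nabla11 \<Gamma> F p v w = frechet_derivative (\<lambda>q. F q w) (at p) v + \<Gamma> p v (F p w) - F p (\<Gamma> p v w)"

definition weak_acm_structure :: "nat \<Rightarrow> ('m::finite) vec set \<Rightarrow> (('m::finite) vec \<Rightarrow> ('m::finite) vec \<Rightarrow> ('m::finite) vec)
    \<Rightarrow> (('m::finite) vec \<Rightarrow> ('m::finite) vec \<Rightarrow> ('m::finite) vec) \<Rightarrow> (('m::finite) vec \<Rightarrow> ('m::finite) vec) \<Rightarrow> (('m::finite) vec \<Rightarrow> ('m::finite) vec \<Rightarrow> real)
    \<Rightarrow> (('m::finite) vec \<Rightarrow> ('m::finite) vec \<Rightarrow> ('m::finite) vec \<Rightarrow> real) \<Rightarrow> bool" where
  "weak_acm_structure n U f Q \<xi> \<eta> g \<longleftrightarrow>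
     CARD('m) = 2 * n + 1 \<and> open U \<and> riemannian_metric U g \<and>
     smooth_11 U f \<and> smooth_11 U Q \<and> smooth_vf U \<xi> \<and> smooth_form U \<eta> \<and>
     (\<forall>p\<in>U. linear (f p) \<and> linear (Q p) \<and> linear (\<eta> p) \<and>
        dim (range (f p)) = 2 * n \<and>
        (\<forall>v. f p (f p v) = - Q p v + \<eta> p v *\<^sub>R \<xi> p) \<and>
        \<eta> p (\<xi> p) = 1 \<and> Q p (\<xi> p) = \<xi> p \<and>
        (\<forall>v. \<eta> p v = 0 \<longrightarrow> \<eta> p (f p v) = 0) \<and>
        bij (Q p) \<and>
        (\<forall>v w. g p (f p v) (f p w) = g p v (Q p w) - \<eta> p v * \<eta> p w))"

definition acm_structure :: "nat \<Rightarrow> ('m::finite) vec set \<Rightarrow> (('m::finite) vec \<Rightarrow> ('m::finite) vec \<Rightarrow> ('m::finite) vec)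
    \<Rightarrow> (('m::finite) vec \<Rightarrow> ('m::finite) vec) \<Rightarrow> (('m::finite) vec \<Rightarrow> ('m::finite) vec \<Rightarrow> real)
    \<Rightarrow> (('m::finite) vec \<Rightarrow> ('m::finite) vec \<Rightarrow> ('m::finite) vec \<Rightarrow> real) \<Rightarrow> bool" where
  "acm_structure n U f \<xi> \<eta> g \<longleftrightarrow> weak_acm_structure n U f (\<lambda>p. id) \<xi> \<eta> g"

definition sasakian :: "nat \<Rightarrow> ('m::finite) vec set \<Rightarrow> (('m::finite) vec \<Rightarrow> ('m::finite) vec \<Rightarrow> ('m::finite) vec \<Rightarrow> ('m::finite) vec)
    \<Rightarrow> (('m::finite) vec \<Rightarrow> ('m::finite) vec \<Rightarrow> ('m::finite) vec)
    \<Rightarrow> (('m::finite) vec \<Rightarrow> ('m::finite) vec) \<Rightarrow> (('m::finite) vec \<Rightarrow> ('m::finite) vec \<Rightarrow> real)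
    \<Rightarrow> (('m::finite) vec \<Rightarrow> ('m::finite) vec \<Rightarrow> ('m::finite) vec \<Rightarrow> real) \<Rightarrow> bool" where
  "sasakian n U \<Gamma> f \<xi> \<eta> g \<longleftrightarrow> acm_structure n U f \<xi> \<eta> g \<and>
     (\<forall>p\<in>U. \<forall>v w. nabla11 \<Gamma> f p v w = g p v w *\<^sub>R \<xi> p - \<eta> p w *\<^sub>R v)"

end

theory Submission imports Defs begin

(* Differentiating f \<xi> = 0 and Q \<xi> = \<xi> along v, the hypothesis on \<nabla>f gives
   f (\<nabla>\<^sub>v \<xi>) = v - g(v, \<xi>) \<xi>  and  (\<nabla>\<^sub>v Q) \<xi> = \<nabla>\<^sub>v \<xi> - Q (\<nabla>\<^sub>v \<xi>).
   Like Q, the tensor \<nabla>\<^sub>v Q is g-self-adjoint; it vanishes on ker \<eta> and g((\<nabla>\<^sub>v Q) \<xi>, \<xi>) = 0,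
   so (\<nabla>\<^sub>v Q) \<xi> = 0 and Q fixes \<nabla>\<^sub>v \<xi>. Then f v = f (f (\<nabla>\<^sub>v \<xi>)) = -\<nabla>\<^sub>v \<xi> + \<eta>(\<nabla>\<^sub>v \<xi>) \<xi>
   is fixed by Q as well. On ker \<eta> we have Q = -f\<^sup>2, so Q is the identity on Q(ker \<eta>), hence on
   ker \<eta> by injectivity, and Q \<xi> = \<xi>. *)

lemma smooth_fun_differentiable: "smooth_fun U h \<Longrightarrow> p \<in> U \<Longrightarrow> h differentiable (at p)"
  unfolding smooth_fun_def by (metis iter_dd.simps(1))

lemma differentiable_vec_componentwise:
  fixes X :: "'a::real_normed_vector \<Rightarrow> real^'n"
  assumes "\<And>i. (\<lambda>q. X q $ i) differentiable (at p)"
  shows "X differentiable (at p)"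
proof -
  have "(\<lambda>q. \<Sum>i\<in>UNIV. X q $ i *\<^sub>R (axis i 1 :: real^'n)) differentiable (at p)"
    by (intro differentiable_sum ballI differentiable_scaleR[OF assms differentiable_const]) simp
  moreover have "(\<lambda>q. \<Sum>i\<in>UNIV. X q $ i *\<^sub>R axis i 1) = X"
    by (rule ext) (metis basis_expansion scalar_mult_eq_scaleR)
  ultimately show ?thesis
    by simp
qed

lemma smooth_vf_differentiable: "smooth_vf U X \<Longrightarrow> p \<in> U \<Longrightarrow> X differentiable (at p)"
  unfolding smooth_vf_def by (intro differentiable_vec_componentwise) (metis smooth_fun_differentiable)

lemma iter_dd_const: "iter_dd vs (\<lambda>q. c) = (\<lambda>q. if vs = [] then c else 0)"
  by (induction vs) auto

lemma smooth_11_id: "smooth_11 U (\<lambda>p. id)"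
  unfolding smooth_11_def smooth_vf_def smooth_fun_def by (simp add: iter_dd_const)

lemma has_derivative_linear_family_apply:
  fixes \<Phi> :: "'a::real_normed_vector \<Rightarrow> 'c::euclidean_space \<Rightarrow> 'b::real_normed_vector"
  assumes U: "open U" "p \<in> U" and lin: "\<And>q. q \<in> U \<Longrightarrow> linear (\<Phi> q)"
    and d\<Phi>: "\<And>x. (\<lambda>q. \<Phi> q x) differentiable (at p)" and dX: "(X has_derivative X') (at p)"
  shows "((\<lambda>q. \<Phi> q (X q)) has_derivative
           (\<lambda>v. \<Phi> p (X' v) + frechet_derivative (\<lambda>q. \<Phi> q (X p)) (at p) v)) (at p)"
proof -
  define D where "D b = frechet_derivative (\<lambda>q. \<Phi> q b) (at p)" for b
  have D: "((\<lambda>q. \<Phi> q b) has_derivative D b) (at p)" for b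
    unfolding D_def using d\<Phi> frechet_derivative_works by blast
  have expand: "\<Phi> q x = (\<Sum>b\<in>Basis. (x \<bullet> b) *\<^sub>R \<Phi> q b)" if "q \<in> U" for q x
  proof -
    have "\<Phi> q x = \<Phi> q (\<Sum>b\<in>Basis. (x \<bullet> b) *\<^sub>R b)" by (simp add: euclidean_representation)
    also have "\<dots> = (\<Sum>b\<in>Basis. (x \<bullet> b) *\<^sub>R \<Phi> q b)"
      using lin[OF that] by (simp add: linear_sum linear_scale)
    finally show ?thesis .
  qed
  have "((\<lambda>q. \<Sum>b\<in>Basis. (X q \<bullet> b) *\<^sub>R \<Phi> q b) has_derivative
      (\<lambda>v. \<Sum>b\<in>Basis. (X p \<bullet> b) *\<^sub>R D b v + (X' v \<bullet> b) *\<^sub>R \<Phi> p b)) (at p)"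
    by (intro has_derivative_sum has_derivative_scaleR has_derivative_inner_left dX D)
  then have total: "((\<lambda>q. \<Phi> q (X q)) has_derivative
      (\<lambda>v. \<Sum>b\<in>Basis. (X p \<bullet> b) *\<^sub>R D b v + (X' v \<bullet> b) *\<^sub>R \<Phi> p b)) (at p)"
    by (rule has_derivative_transform_within_open[OF _ U]) (simp add: expand)
  have "((\<lambda>q. \<Sum>b\<in>Basis. (X p \<bullet> b) *\<^sub>R \<Phi> q b) has_derivative
      (\<lambda>v. \<Sum>b\<in>Basis. (X p \<bullet> b) *\<^sub>R D b v)) (at p)"
    by (intro has_derivative_sum has_derivative_scaleR_right D)
  then have "((\<lambda>q. \<Phi> q (X p)) has_derivative (\<lambda>v. \<Sum>b\<in>Basis. (X p \<bullet> b) *\<^sub>R D b v)) (at p)"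
    by (rule has_derivative_transform_within_open[OF _ U]) (simp add: expand)
  then have "frechet_derivative (\<lambda>q. \<Phi> q (X p)) (at p) = (\<lambda>v. \<Sum>b\<in>Basis. (X p \<bullet> b) *\<^sub>R D b v)"
    by (rule frechet_derivative_at[symmetric])
  then show ?thesis
    using total by (simp add: sum.distrib expand[OF U(2), of "X' _"] add.commute)
qed

definition nabla_vf :: "('m vec \<Rightarrow> 'm vec \<Rightarrow> 'm vec \<Rightarrow> 'm vec) \<Rightarrow> ('m::finite vec \<Rightarrow> 'm vec)
    \<Rightarrow> 'm vec \<Rightarrow> 'm vec \<Rightarrow> 'm vec" where
  "nabla_vf \<Gamma> X p v = frechet_derivative X (at p) v + \<Gamma> p v (X p)"

lemma nabla_vf_transform_within_open:
  assumes "X differentiable (at p)" "open U" "p \<in> U" "\<And>q. q \<in> U \<Longrightarrow> X q = Y q"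
  shows "nabla_vf \<Gamma> X p = nabla_vf \<Gamma> Y p"
  using frechet_derivative_transform_within_open[OF assms] assms(3,4)
  by (simp add: nabla_vf_def fun_eq_iff)

lemma nabla_vf_const: "nabla_vf \<Gamma> (\<lambda>q. c) p v = \<Gamma> p v c"
  by (simp add: nabla_vf_def)

lemma nabla_vf_apply:
  assumes "open U" "p \<in> U" "\<And>q. q \<in> U \<Longrightarrow> linear (F q)"
    and "\<And>w. (\<lambda>q. F q w) differentiable (at p)" and "X differentiable (at p)"
  shows "nabla_vf \<Gamma> (\<lambda>q. F q (X q)) p v = nabla11 \<Gamma> F p v (X p) + F p (nabla_vf \<Gamma> X p v)"
proof -
  have "((\<lambda>q. F q (X q)) has_derivative
      (\<lambda>v. F p (frechet_derivative X (at p) v) + frechet_derivative (\<lambda>q. F q (X p)) (at p) v)) (at p)"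
    using assms by (intro has_derivative_linear_family_apply) (auto simp: frechet_derivative_works)
  then show ?thesis
    using assms(2,3) by (simp add: nabla_vf_def nabla11_def frechet_derivative_at[symmetric] linear_add)
qed

lemma nabla11_minus_id:
  assumes "(\<lambda>q. F q w) differentiable (at p)" and "linear (\<Gamma> p v)"
  shows "nabla11 \<Gamma> (\<lambda>q u. F q u - u) p v w = nabla11 \<Gamma> F p v w"
proof -
  have "frechet_derivative (\<lambda>q. F q w - w) (at p) = frechet_derivative (\<lambda>q. F q w) (at p)"
    using has_derivative_diff[OF assms(1)[unfolded frechet_derivative_works] has_derivative_const]
    by (simp add: frechet_derivative_at[symmetric])
  then show ?thesis
    using assms(2) by (simp add: nabla11_def linear_diff)
qed

lemma has_derivative_metric:
  assumes "riemannian_metric U g" "levi_civita U g \<Gamma>" "open U" "p \<in> U"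
    and "X differentiable (at p)" "Y differentiable (at p)"
  shows "((\<lambda>q. g q (X q) (Y q)) has_derivative
           (\<lambda>v. g p (nabla_vf \<Gamma> X p v) (Y p) + g p (X p) (nabla_vf \<Gamma> Y p v))) (at p)"
proof -
  have bil: "bilinear (g q)" if "q \<in> U" for q
    using assms(1) that by (simp add: riemannian_metric_def)
  have dg: "(\<lambda>q. g q x y) differentiable (at p)" for x y
    using assms(1,4) smooth_fun_differentiable
    unfolding riemannian_metric_def smooth_02_def by blast
  have dY: "(Y has_derivative frechet_derivative Y (at p)) (at p)"
    using assms(6) by (simp add: frechet_derivative_works)
  have inner: "((\<lambda>q. g q x (Y q)) has_derivative
      (\<lambda>v. g p x (frechet_derivative Y (at p) v) + frechet_derivative (\<lambda>q. g q x (Y p)) (at p) v)) (at p)"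
    for x
    using assms(3,4) bil dg dY
    by (intro has_derivative_linear_family_apply) (auto simp: bilinear_def)
  have "((\<lambda>q. g q (X q) (Y q)) has_derivative
      (\<lambda>v. g p (frechet_derivative X (at p) v) (Y p)
         + frechet_derivative (\<lambda>q. g q (X p) (Y q)) (at p) v)) (at p)"
    using assms(3,4) assms(5)[unfolded frechet_derivative_works] bil differentiableI[OF inner]
    by (intro has_derivative_linear_family_apply[where \<Phi> = "\<lambda>q x. g q x (Y q)"])
       (auto simp: bilinear_def)
  moreover have "frechet_derivative (\<lambda>q. g q (X p) (Y p)) (at p) v
      = g p (\<Gamma> p v (X p)) (Y p) + g p (X p) (\<Gamma> p v (Y p))" for v
    using assms(2,4) by (simp add: levi_civita_def)
  ultimately have "((\<lambda>q. g q (X q) (Y q)) has_derivative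
      (\<lambda>v. g p (frechet_derivative X (at p) v) (Y p) + g p (X p) (frechet_derivative Y (at p) v)
         + (g p (\<Gamma> p v (X p)) (Y p) + g p (X p) (\<Gamma> p v (Y p))))) (at p)"
    using inner[of "X p"] by (simp add: frechet_derivative_at[symmetric] add.assoc)
  then show ?thesis
    by (rule has_derivative_eq_rhs)
       (simp add: fun_eq_iff nabla_vf_def bilinear_ladd[OF bil] bilinear_radd[OF bil] assms(4))
qed

lemma nabla11_self_adjoint:
  assumes "riemannian_metric U g" "levi_civita U g \<Gamma>" "open U" "p \<in> U"
    and "\<And>q. q \<in> U \<Longrightarrow> linear (F q)" and "\<And>w. (\<lambda>q. F q w) differentiable (at p)"
    and self_adjoint: "\<And>q x y. q \<in> U \<Longrightarrow> g q (F q x) y = g q x (F q y)"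
  shows "g p (nabla11 \<Gamma> F p v a) b = g p a (nabla11 \<Gamma> F p v b)"
proof -
  have bil: "bilinear (g p)"
    using assms(1,4) by (simp add: riemannian_metric_def)
  have nabla_F: "nabla_vf \<Gamma> (\<lambda>q. F q c) p v = nabla11 \<Gamma> F p v c + F p (\<Gamma> p v c)" for c
    using nabla_vf_apply[of U p F "\<lambda>q. c"] assms(3-6) by (simp add: nabla_vf_const)
  (* Differentiate g (F a) b = g a (F b) for constant a, b: the \<Gamma>-terms cancel by self-adjointness
     of F p. *)
  have lhs: "((\<lambda>q. g q (F q a) b) has_derivative
      (\<lambda>v. g p (nabla_vf \<Gamma> (\<lambda>q. F q a) p v) b + g p (F p a) (\<Gamma> p v b))) (at p)"
    using has_derivative_metric[OF assms(1-4) assms(6)[of a] differentiable_const[of b]]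
    by (simp only: nabla_vf_const)
  have rhs: "((\<lambda>q. g q (F q a) b) has_derivative
      (\<lambda>v. g p (\<Gamma> p v a) (F p b) + g p a (nabla_vf \<Gamma> (\<lambda>q. F q b) p v))) (at p)"
  proof (rule has_derivative_transform_within_open[OF _ assms(3,4)])
    show "((\<lambda>q. g q a (F q b)) has_derivative
        (\<lambda>v. g p (\<Gamma> p v a) (F p b) + g p a (nabla_vf \<Gamma> (\<lambda>q. F q b) p v))) (at p)"
      using has_derivative_metric[OF assms(1-4) differentiable_const[of a] assms(6)[of b]]
      unfolding nabla_vf_const .
    show "g q a (F q b) = g q (F q a) b" if "q \<in> U" for q
      using self_adjoint[OF that] by simp
  qed
  have "g p (nabla_vf \<Gamma> (\<lambda>q. F q a) p v) b + g p (F p a) (\<Gamma> p v b)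
      = g p (\<Gamma> p v a) (F p b) + g p a (nabla_vf \<Gamma> (\<lambda>q. F q b) p v)"
    using fun_cong[OF has_derivative_unique[OF lhs rhs], of v] .
  then show ?thesis
    using self_adjoint[OF assms(4)] by (simp add: nabla_F bilinear_ladd[OF bil] bilinear_radd[OF bil])
qed

lemma self_adjoint_vanishing_on_kernel:
  fixes N :: "'a::real_vector \<Rightarrow> 'a" and g :: "'a \<Rightarrow> 'a \<Rightarrow> real" and \<eta> :: "'a \<Rightarrow> real"
  assumes "bilinear g" and pos: "\<And>x. x \<noteq> 0 \<Longrightarrow> g x x > 0" and "linear \<eta>" "\<eta> \<xi> = 1"
    and self_adjoint: "\<And>a b. g (N a) b = g a (N b)" and kernel: "\<And>w. \<eta> w = 0 \<Longrightarrow> N w = 0"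
    and "g (N \<xi>) \<xi> = 0"
  shows "N \<xi> = 0"
proof -
  have "g (N \<xi>) u = 0" for u
  proof -
    have "\<eta> (u - \<eta> u *\<^sub>R \<xi>) = 0"
      using assms(3,4) by (simp add: linear_diff linear_scale)
    then have "g (N \<xi>) (u - \<eta> u *\<^sub>R \<xi>) = 0"
      using self_adjoint kernel bilinear_rzero[OF assms(1)] by metis
    then show ?thesis
      using assms(1,7) by (simp add: bilinear_rsub bilinear_rmul)
  qed
  then have "g (N \<xi>) (N \<xi>) = 0" .
  then show ?thesis
    using pos[of "N \<xi>"] by fastforce
qed

locale weak_acm_space =
  fixes f Q :: "'a::real_vector \<Rightarrow> 'a" and \<xi> :: 'a and \<eta> :: "'a \<Rightarrow> real"
    and g :: "'a \<Rightarrow> 'a \<Rightarrow> real"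
  assumes linear_f: "linear f" and linear_Q: "linear Q" and linear_eta: "linear \<eta>"
    and f_f: "f (f v) = - Q v + \<eta> v *\<^sub>R \<xi>"
    and eta_xi: "\<eta> \<xi> = 1" and Q_xi: "Q \<xi> = \<xi>"
    and eta_f: "\<eta> v = 0 \<Longrightarrow> \<eta> (f v) = 0"
    and bij_Q: "bij Q"
    and g_f_f: "g (f v) (f w) = g v (Q w) - \<eta> v * \<eta> w"
    and g_sym: "g v w = g w v"
begin

lemma f_xi: "f \<xi> = 0"
proof -
  have ff_xi: "f (f \<xi>) = 0"
    using f_f[of \<xi>] eta_xi Q_xi by simp
  define a where "a = \<eta> (f \<xi>)"
  have "\<eta> (f \<xi> - a *\<^sub>R \<xi>) = 0"
    unfolding a_def using linear_eta eta_xi by (simp add: linear_diff linear_scale)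
  then have "\<eta> (f (f \<xi> - a *\<^sub>R \<xi>)) = 0"
    by (rule eta_f)
  then have "a * a = 0"
    using linear_f linear_eta ff_xi unfolding a_def by (simp add: linear_diff linear_scale linear_neg)
  then have "Q (f \<xi>) = 0"
    using f_f[of "f \<xi>"] ff_xi linear_f unfolding a_def by (simp add: linear_0)
  then show ?thesis
    using bij_Q linear_Q by (metis bij_is_inj injD linear_0)
qed

lemma Q_self_adjoint: "g (Q x) y = g x (Q y)"
  using g_f_f[of x y] g_f_f[of y x] g_sym by (simp add: mult.commute)

lemma Q_f_eq_f_if:
  assumes "Q W = W" and "f W = v - c *\<^sub>R \<xi>"
  shows "Q (f v) = f v"
proof -
  have "f v = f (f W)"
    using assms(2) f_xi linear_f by (simp add: linear_diff linear_scale)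
  also have "\<dots> = - W + \<eta> W *\<^sub>R \<xi>"
    using f_f assms(1) by simp
  finally show ?thesis
    using linear_Q Q_xi assms(1) by (simp add: linear_diff linear_scale)
qed

lemma Q_eq_id_if_fixes_range_f:
  assumes Q_f: "\<And>v. Q (f v) = f v"
  shows "Q = id"
proof
  fix x
  define x\<^sub>0 where "x\<^sub>0 = x - \<eta> x *\<^sub>R \<xi>"
  have "\<eta> x\<^sub>0 = 0"
    unfolding x\<^sub>0_def using linear_eta eta_xi by (simp add: linear_diff linear_scale)
  then have "Q x\<^sub>0 = f (- f x\<^sub>0)"
    using f_f[of x\<^sub>0] linear_f by (simp add: linear_neg)
  then have "Q (Q x\<^sub>0) = Q x\<^sub>0"
    using Q_f by simp
  then have "Q x\<^sub>0 = x\<^sub>0"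
    using bij_Q by (meson bij_is_inj injD)
  then show "Q x = id x"
    using linear_Q Q_xi unfolding x\<^sub>0_def by (simp add: linear_diff linear_scale)
qed

end

locale weak_acm_chart =
  fixes n :: nat and U :: "'m::finite vec set" and f Q :: "'m vec \<Rightarrow> 'm vec \<Rightarrow> 'm vec"
    and \<xi> :: "'m vec \<Rightarrow> 'm vec" and \<eta> :: "'m vec \<Rightarrow> 'm vec \<Rightarrow> real"
    and g :: "'m vec \<Rightarrow> 'm vec \<Rightarrow> 'm vec \<Rightarrow> real" and \<Gamma> :: "'m vec \<Rightarrow> 'm vec \<Rightarrow> 'm vec \<Rightarrow> 'm vec"
  assumes weak_acm: "weak_acm_structure n U f Q \<xi> \<eta> g"
    and connection: "levi_civita U g \<Gamma>"
begin

lemma open_U: "open U" and metric: "riemannian_metric U g"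
  using weak_acm by (simp_all add: weak_acm_structure_def)

lemma weak_acm_space_at:
  assumes "p \<in> U"
  shows "weak_acm_space (f p) (Q p) (\<xi> p) (\<eta> p) (g p)"
  using weak_acm metric assms
  unfolding weak_acm_structure_def riemannian_metric_def weak_acm_space_def by blast

lemma linear_f_at: "p \<in> U \<Longrightarrow> linear (f p)" and linear_Q_at: "p \<in> U \<Longrightarrow> linear (Q p)"
  using weak_acm by (simp_all add: weak_acm_structure_def)

lemma linear_Gamma: "p \<in> U \<Longrightarrow> linear (\<Gamma> p v)"
  using connection by (simp add: levi_civita_def bilinear_def)

lemma f_differentiable: "p \<in> U \<Longrightarrow> (\<lambda>q. f q w) differentiable (at p)"
  and Q_differentiable: "p \<in> U \<Longrightarrow> (\<lambda>q. Q q w) differentiable (at p)"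
  and xi_differentiable: "p \<in> U \<Longrightarrow> \<xi> differentiable (at p)"
  using weak_acm smooth_vf_differentiable[of U]
  unfolding weak_acm_structure_def smooth_11_def by blast+

lemma f_nabla_xi:
  assumes "p \<in> U" and sasakian_at: "\<And>w. nabla11 \<Gamma> f p v w = g p v w *\<^sub>R \<xi> p - \<eta> p w *\<^sub>R v"
  shows "f p (nabla_vf \<Gamma> \<xi> p v) = v - g p v (\<xi> p) *\<^sub>R \<xi> p"
proof -
  have "0 = nabla_vf \<Gamma> (\<lambda>q. 0) p v"
    using linear_Gamma[OF assms(1)] by (simp add: nabla_vf_const linear_0)
  also have "\<dots> = nabla_vf \<Gamma> (\<lambda>q. f q (\<xi> q)) p v"
    using weak_acm_space.f_xi[OF weak_acm_space_at] open_U assms(1)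
    by (intro nabla_vf_transform_within_open[THEN fun_cong]) auto
  also have "\<dots> = nabla11 \<Gamma> f p v (\<xi> p) + f p (nabla_vf \<Gamma> \<xi> p v)"
    using open_U assms(1) linear_f_at f_differentiable xi_differentiable by (intro nabla_vf_apply)
  also have "\<dots> = g p v (\<xi> p) *\<^sub>R \<xi> p - v + f p (nabla_vf \<Gamma> \<xi> p v)"
    using sasakian_at weak_acm_space.eta_xi[OF weak_acm_space_at[OF assms(1)]] by simp
  finally show ?thesis
    by (simp add: algebra_simps)
qed

lemma nabla_Q_xi:
  assumes "p \<in> U"
  shows "nabla11 \<Gamma> Q p v (\<xi> p) = nabla_vf \<Gamma> \<xi> p v - Q p (nabla_vf \<Gamma> \<xi> p v)"
proof -
  have "nabla_vf \<Gamma> \<xi> p v = nabla_vf \<Gamma> (\<lambda>q. Q q (\<xi> q)) p v"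
    using weak_acm_space.Q_xi[OF weak_acm_space_at] open_U assms xi_differentiable
    by (intro nabla_vf_transform_within_open[THEN fun_cong]) auto
  also have "\<dots> = nabla11 \<Gamma> Q p v (\<xi> p) + Q p (nabla_vf \<Gamma> \<xi> p v)"
    using open_U assms linear_Q_at Q_differentiable xi_differentiable by (intro nabla_vf_apply)
  finally show ?thesis
    by (simp add: algebra_simps)
qed

lemma nabla_Q_xi_eq_0:
  assumes "p \<in> U" and kernel: "\<And>w. \<eta> p w = 0 \<Longrightarrow> nabla11 \<Gamma> Q p v w = 0"
  shows "nabla11 \<Gamma> Q p v (\<xi> p) = 0"
proof (rule self_adjoint_vanishing_on_kernel[where g = "g p" and \<eta> = "\<eta> p"
      and \<xi> = "\<xi> p" and N = "nabla11 \<Gamma> Q p v"])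
  interpret weak_acm_space "f p" "Q p" "\<xi> p" "\<eta> p" "g p"
    using weak_acm_space_at[OF assms(1)] .
  have bil: "bilinear (g p)"
    using metric assms(1) by (simp add: riemannian_metric_def)
  then show "bilinear (g p)" .
  show "\<And>x. x \<noteq> 0 \<Longrightarrow> g p x x > 0"
    using metric assms(1) by (simp add: riemannian_metric_def)
  show "linear (\<eta> p)" "\<eta> p (\<xi> p) = 1"
    by (rule linear_eta, rule eta_xi)
  show "g p (nabla11 \<Gamma> Q p v a) b = g p a (nabla11 \<Gamma> Q p v b)" for a b
    using metric connection open_U assms(1) linear_Q_at Q_differentiable[OF assms(1)]
      weak_acm_space.Q_self_adjoint[OF weak_acm_space_at]
    by (rule nabla11_self_adjoint)
  show "\<And>w. \<eta> p w = 0 \<Longrightarrow> nabla11 \<Gamma> Q p v w = 0"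
    by (rule kernel)
  show "g p (nabla11 \<Gamma> Q p v (\<xi> p)) (\<xi> p) = 0"
    using Q_self_adjoint[of _ "\<xi> p"] Q_xi
    by (simp add: nabla_Q_xi[OF assms(1)] bilinear_lsub[OF bil])
qed

lemma Q_eq_id:
  assumes "p \<in> U"
    and sasakian_at: "\<And>v w. nabla11 \<Gamma> f p v w = g p v w *\<^sub>R \<xi> p - \<eta> p w *\<^sub>R v"
    and kernel: "\<And>v w. \<eta> p w = 0 \<Longrightarrow> nabla11 \<Gamma> Q p v w = 0"
  shows "Q p = id"
proof -
  interpret weak_acm_space "f p" "Q p" "\<xi> p" "\<eta> p" "g p"
    using weak_acm_space_at[OF assms(1)] .
  show ?thesis
  proof (rule Q_eq_id_if_fixes_range_f)
    fix v
    have "Q p (nabla_vf \<Gamma> \<xi> p v) = nabla_vf \<Gamma> \<xi> p v"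
      using nabla_Q_xi[OF assms(1)] nabla_Q_xi_eq_0[OF assms(1) kernel] by simp
    then show "Q p (f p v) = f p v"
      using f_nabla_xi[OF assms(1) sasakian_at] by (rule Q_f_eq_f_if)
  qed
qed

end

lemma acm_structure_if_Q_eq_id:
  assumes "weak_acm_structure n U f Q \<xi> \<eta> g" and "\<And>p. p \<in> U \<Longrightarrow> Q p = id"
  shows "acm_structure n U f \<xi> \<eta> g"
  using assms(1) unfolding acm_structure_def weak_acm_structure_def
  by (simp add: assms(2) smooth_11_id)

theorem mainTheorem14:
  fixes n :: nat and U :: "('m::finite) vec set"
    and f Q :: "'m vec \<Rightarrow> 'm vec \<Rightarrow> 'm vec" and \<xi> :: "'m vec \<Rightarrow> 'm vec"
    and \<eta> :: "'m vec \<Rightarrow> 'm vec \<Rightarrow> real" and g :: "'m vec \<Rightarrow> 'm vec \<Rightarrow> 'm vec \<Rightarrow> real"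
    and \<Gamma> :: "'m vec \<Rightarrow> 'm vec \<Rightarrow> 'm vec \<Rightarrow> 'm vec"
  assumes "weak_acm_structure n U f Q \<xi> \<eta> g"
    and "levi_civita U g \<Gamma>"
    and "\<forall>p\<in>U. \<forall>v w. nabla11 \<Gamma> f p v w = g p v w *\<^sub>R \<xi> p - \<eta> p w *\<^sub>R v"
    and "\<forall>p\<in>U. \<forall>v w. \<eta> p w = 0 \<longrightarrow> nabla11 \<Gamma> (\<lambda>q u. Q q u - u) p v w = 0"
  shows "(\<forall>p\<in>U. Q p = id) \<and> sasakian n U \<Gamma> f \<xi> \<eta> g"
proof -
  interpret weak_acm_chart n U f Q \<xi> \<eta> g \<Gamma>
    using assms(1,2) by (rule weak_acm_chart.intro)
  have Q_id: "Q p = id" if p: "p \<in> U" for p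
  proof (rule Q_eq_id[OF p])
    show "nabla11 \<Gamma> f p v w = g p v w *\<^sub>R \<xi> p - \<eta> p w *\<^sub>R v" for v w
      by (rule assms(3)[rule_format, OF p])
    show "nabla11 \<Gamma> Q p v w = 0" if "\<eta> p w = 0" for v w
      unfolding nabla11_minus_id[of Q w p \<Gamma> v, OF Q_differentiable[OF p] linear_Gamma[OF p], symmetric]
      by (rule assms(4)[rule_format, OF p that])
  qed
  then have "acm_structure n U f \<xi> \<eta> g"
    by (rule acm_structure_if_Q_eq_id[OF assms(1)])
  with Q_id assms(3) show ?thesis
    by (simp add: sasakian_def)
qed

end
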